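(* Let $N\in\mathbb{N}$ and let $c_0,\rho_0>0$ and $\kappa_m,\tau_m>0$ for $m=1,\dots,N$. Define $$\tilde c_0=\frac{c_0}{\sqrt{1+\sum_{m=1}^N c_0^2\rho_0\kappa_m}},\qquad\tilde\tau_m=\tau_m(1-N\tilde c_0^2\rho_0\kappa_m),$$ and the attenuation coefficient of Nachman, Smith and Waag $$\alpha^*_{nsw}(\omega)=\frac{-i\omega}{c_0}\left[\frac{c_0}{\tilde c_0}\sqrt{\frac1N\sum_{m=1}^N\frac{1-i\tilde\tau_m\omega}{1-i\tau_m\omega}}-1\right],\qquad\omega\in\mathbb{R}.$$ If $\tilde\tau_m<\tau_m$ for all $m\in\{1,\dots,N\}$, then the kernel $K(\vec x,t)=\frac{1}{\sqrt{2\pi}}\mathcal{F}^{-1}\{e^{-\alpha^*_{nsw}(\cdot)|\vec x|}\}(t)$ is causal.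
   Context: Fourier convention: $\mathcal{F}^{-1}\{\hat f\}(t)=\frac{1}{\sqrt{2\pi}}\int_{\mathbb{R}}e^{-i\omega t}\hat f(\omega)\,d\omega$ (tempered distributions). The square root of a complex number is the root with non-negative real part. $K$ is causal if $t\mapsto K(\vec x,t)$ vanishes for $t<0$ for every $\vec x\in\mathbb{R}^3$. *)

theory Defs
  imports "HOL-Analysis.Analysis"
begin

definition c0_tilde :: "real \<Rightarrow> real \<Rightarrow> (nat \<Rightarrow> real) \<Rightarrow> nat \<Rightarrow> real" where
  "c0_tilde c0 rho0 kappa N = c0 / sqrt (1 + (\<Sum>m=1..N. c0\<^sup>2 * rho0 * kappa m))"

definition tau_tilde :: "real \<Rightarrow> real \<Rightarrow> (nat \<Rightarrow> real) \<Rightarrow> (nat \<Rightarrow> real) \<Rightarrow> nat \<Rightarrow> nat \<Rightarrow> real" where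
  "tau_tilde c0 rho0 kappa tau N m =
     tau m * (1 - real N * (c0_tilde c0 rho0 kappa N)\<^sup>2 * rho0 * kappa m)"

text \<open>Attenuation coefficient of Nachman, Smith and Waag (csqrt = principal root, Re \<ge> 0).\<close>
definition alpha_nsw :: "real \<Rightarrow> real \<Rightarrow> (nat \<Rightarrow> real) \<Rightarrow> (nat \<Rightarrow> real) \<Rightarrow> nat \<Rightarrow> real \<Rightarrow> complex" where
  "alpha_nsw c0 rho0 kappa tau N \<omega> =
     (- \<i> * complex_of_real \<omega> / complex_of_real c0) *
     (complex_of_real (c0 / c0_tilde c0 rho0 kappa N) *
        csqrt ((1 / of_nat N) * (\<Sum>m=1..N.
           (1 - \<i> * complex_of_real (tau_tilde c0 rho0 kappa tau N m * \<omega>)) /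
           (1 - \<i> * complex_of_real (tau m * \<omega>)))) - 1)"

definition inv_fourier :: "(real \<Rightarrow> complex) \<Rightarrow> real \<Rightarrow> complex" where
  "inv_fourier g t = (1 / complex_of_real (sqrt (2 * pi))) *
     (\<integral>\<omega>. exp (- \<i> * complex_of_real (\<omega> * t)) * g \<omega> \<partial>lborel)"

definition smooth_fun :: "(real \<Rightarrow> complex) \<Rightarrow> bool" where
  "smooth_fun \<phi> \<longleftrightarrow> (\<exists>D :: nat \<Rightarrow> real \<Rightarrow> complex. D 0 = \<phi> \<and>
      (\<forall>k t. (D k has_vector_derivative D (Suc k) t) (at t)))"

definition test_fun_on :: "real set \<Rightarrow> (real \<Rightarrow> complex) \<Rightarrow> bool" where
  "test_fun_on U \<phi> \<longleftrightarrow> smooth_fun \<phi> \<and> compact (closure {t. \<phi> t \<noteq> 0})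
      \<and> closure {t. \<phi> t \<noteq> 0} \<subseteq> U"

text \<open>Action of the tempered distribution t \<mapsto> (2 pi)^{-1/2} F^{-1}{ghat}(t) on a test function
  \<phi>: by duality (the bilinear transpose of F^{-1} is F^{-1}),
  \<langle>F^{-1} ghat, \<phi>\<rangle> = \<integral> ghat(\<omega>) (F^{-1} \<phi>)(\<omega>) d\<omega>.\<close>
definition kernel_pairing :: "(real \<Rightarrow> complex) \<Rightarrow> (real \<Rightarrow> complex) \<Rightarrow> complex" where
  "kernel_pairing ghat \<phi> = (1 / complex_of_real (sqrt (2 * pi))) *
     (\<integral>\<omega>. ghat \<omega> * inv_fourier \<phi> \<omega> \<partial>lborel)"

text \<open>K(x,t) = (2 pi)^{-1/2} F^{-1}{Khat(x,.)}(t) is causal iff for every x the distribution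
  t \<mapsto> K(x,t) vanishes on the open set t < 0.\<close>
definition causal_kernel :: "(real^3 \<Rightarrow> real \<Rightarrow> complex) \<Rightarrow> bool" where
  "causal_kernel Khat \<longleftrightarrow>
     (\<forall>x \<phi>. test_fun_on {..<0} \<phi> \<longrightarrow> kernel_pairing (Khat x) \<phi> = 0)"

end

theory Submission
  imports Defs "HOL-Complex_Analysis.Complex_Analysis" "HOL-Probability.Sinc_Integral"
begin

text \<open>
  Causality follows from a Paley--Wiener type argument: if the symbol \<open>\<omega> \<mapsto> e^{-\<alpha>(\<omega>) r}\<close>
  extends to a bounded holomorphic function \<open>g\<close> on the closed upper half-plane, then its pairing
  with a test function \<open>\<phi>\<close> supported in \<open>t < 0\<close> vanishes. Replacing \<open>\<phi>\<close> by
  \<open>\<psi> = \<phi> - 2\<phi>' + \<phi>''\<close> divides the symbol by \<open>(1 - i\<omega>)\<^sup>2\<close>, which makes the double integral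
  absolutely convergent; after Fubini the inner integral
  \<open>\<integral> g(\<omega>) e^{-i\<omega>t} / (1 - i\<omega>)\<^sup>2 d\<omega>\<close> vanishes for \<open>t \<le> 0\<close> by closing the contour
  in the upper half-plane.

  For the Nachman--Smith--Waag coefficient put \<open>S = \<Sum>\<^sub>m c\<^sub>0\<^sup>2 \<rho>\<^sub>0 \<kappa>\<^sub>m\<close>. The hypothesis
  \<open>tau_tilde \<dots> m < tau m\<close> makes the radicand equal to \<open>1/(1+S)\<close> plus a positive combination
  of the functions \<open>1/(1 - i\<tau>\<^sub>m\<omega>)\<close>, so its real part stays \<open>\<ge> 1/(1+S)\<close> on the half-plane
  and the principal root is holomorphic there. Since \<open>(c\<^sub>0 / c0_tilde \<dots>)\<^sup>2 = 1 + S\<close>, the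
  linear growth of \<open>-i\<omega>(\<dots>)\<close> cancels and \<open>\<alpha>\<close> is bounded.
\<close>

lemma one_minus_ii_mult_upper_halfplane:
  fixes w :: complex and \<tau> :: real
  assumes "Im w \<ge> 0" "\<tau> \<ge> 0"
  shows "Re (1 - \<i> * of_real \<tau> * w) \<ge> 1"
    and "1 - \<i> * of_real \<tau> * w \<noteq> 0"
    and "\<tau> * cmod w \<le> cmod (1 - \<i> * of_real \<tau> * w)"
proof -
  have Re: "Re (1 - \<i> * of_real \<tau> * w) = 1 + \<tau> * Im w"
    and Im: "Im (1 - \<i> * of_real \<tau> * w) = - \<tau> * Re w" by simp_all
  show "Re (1 - \<i> * of_real \<tau> * w) \<ge> 1"
    using assms by (simp add: Re)
  then show "1 - \<i> * of_real \<tau> * w \<noteq> 0"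
    by (metis not_one_le_zero zero_complex.sel(1))
  have "(\<tau> * cmod w)\<^sup>2 \<le> (cmod (1 - \<i> * of_real \<tau> * w))\<^sup>2"
    using assms unfolding cmod_power2[of "1 - \<i> * of_real \<tau> * w"] Re Im power_mult_distrib
      cmod_power2[of w]
    by (simp add: algebra_simps power2_eq_square)
  then show "\<tau> * cmod w \<le> cmod (1 - \<i> * of_real \<tau> * w)"
    by (rule power2_le_imp_le) simp
qed

lemma one_plus_norm_square_le:
  fixes w :: complex
  assumes "Im w \<ge> 0"
  shows "1 + (cmod w)\<^sup>2 \<le> cmod ((1 - \<i> * w)\<^sup>2)"
proof -
  have "cmod ((1 - \<i> * w)\<^sup>2) = (1 + Im w)\<^sup>2 + (Re w)\<^sup>2"
    by (simp add: norm_power cmod_power2)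
  also have "\<dots> = 1 + 2 * Im w + (cmod w)\<^sup>2"
    unfolding cmod_power2[of w] by (simp add: power2_eq_square algebra_simps)
  finally show ?thesis
    using assms by simp
qed

lemma has_contour_integral_semicircle_eq_neg_integral:
  fixes f :: "complex \<Rightarrow> complex" and r :: real
  assumes holo: "\<And>w. Im w \<ge> 0 \<Longrightarrow> f field_differentiable at w" and r: "r > 0"
  shows "(f has_contour_integral - integral {-r..r} (\<lambda>x. f (of_real x))) (part_circlepath 0 r 0 pi)"
proof -
  define H where "H = {w. Im w \<ge> 0}"
  have convex_H: "convex H"
    unfolding H_def by (rule convex_halfspace_Im_ge)
  have cont: "continuous_on H f"
    unfolding H_def
    by (intro continuous_at_imp_continuous_on ballI field_differentiable_imp_continuous_at holo) simp
  define p1 where "p1 = linepath (- complex_of_real r) (complex_of_real r)"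
  define p2 where "p2 = part_circlepath 0 r 0 pi"
  have seg: "closed_segment (- complex_of_real r) (complex_of_real r) \<subseteq> H"
    by (rule closed_segment_subset) (auto simp: H_def intro: convex_H[unfolded H_def])
  have arc: "path_image p2 \<subseteq> H"
    unfolding p2_def H_def using r
    by (auto simp: path_image_part_circlepath Im_exp sin_ge_zero)
  have v1: "valid_path p1" and v2: "valid_path p2"
    unfolding p1_def p2_def by simp_all
  have joins: "pathfinish p1 = pathstart p2"
    unfolding p1_def p2_def by simp
  have h1: "(f has_contour_integral integral {-r..r} (\<lambda>x. f (of_real x))) p1"
  proof -
    have "f contour_integrable_on p1"
      unfolding p1_def
      by (rule contour_integrable_continuous_linepath) (rule continuous_on_subset[OF cont seg])
    then show ?thesis
      using contour_integral_linepath_Reals_eq[of "- complex_of_real r" "complex_of_real r" f] r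
      unfolding p1_def by (auto dest: has_contour_integral_integral)
  qed
  have h2: "(f has_contour_integral contour_integral p2 f) p2"
    unfolding p2_def
    by (intro has_contour_integral_integral contour_integrable_continuous_part_circlepath
        continuous_on_subset[OF cont arc[unfolded p2_def]])
  have "(f has_contour_integral 0) (p1 +++ p2)"
  proof (rule Cauchy_theorem_convex[OF cont convex_H finite.emptyI])
    show "f field_differentiable at w" if "w \<in> interior H - {}" for w
      using that interior_subset holo by (auto simp: H_def)
    show "valid_path (p1 +++ p2)"
      using v1 v2 joins by simp
    show "path_image (p1 +++ p2) \<subseteq> H"
      using seg arc joins by (simp add: path_image_join p1_def)
    show "pathfinish (p1 +++ p2) = pathstart (p1 +++ p2)"
      unfolding p1_def p2_def by simp
  qed
  then have "contour_integral p2 f = - integral {-r..r} (\<lambda>x. f (of_real x))"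
    using has_contour_integral_unique[OF has_contour_integral_join[OF h1 h2 v1 v2]]
    by (simp add: eq_neg_iff_add_eq_0 add.commute)
  then show ?thesis
    using h2 unfolding p2_def by simp
qed

lemma norm_integral_symmetric_interval_le:
  fixes f :: "complex \<Rightarrow> complex" and B r :: real
  assumes holo: "\<And>w. Im w \<ge> 0 \<Longrightarrow> f field_differentiable at w"
    and bound: "\<And>w. Im w \<ge> 0 \<Longrightarrow> cmod (f w) \<le> B / (1 + (cmod w)\<^sup>2)"
    and r: "r > 0"
  shows "cmod (integral {-r..r} (\<lambda>x. f (of_real x))) \<le> B * pi / r"
proof -
  have "cmod (f 0) \<le> B"
    using bound[of 0] by simp
  then have B: "B \<ge> 0"
    using norm_ge_zero order_trans by blast
  have "cmod (- integral {-r..r} (\<lambda>x. f (of_real x))) \<le> B / (1 + r\<^sup>2) * r * (pi - 0)"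
  proof (rule has_contour_integral_bound_part_circlepath
      [OF has_contour_integral_semicircle_eq_neg_integral[OF holo r]])
    show "0 \<le> B / (1 + r\<^sup>2)" "0 < r" "0 \<le> pi"
      using B r by auto
    show "cmod (f w) \<le> B / (1 + r\<^sup>2)" if w: "w \<in> path_image (part_circlepath 0 r 0 pi)" for w
    proof -
      have "Im w \<ge> 0"
        using w r by (auto simp: path_image_part_circlepath Im_exp sin_ge_zero)
      moreover have "cmod w = r"
        using in_path_image_part_circlepath[OF w] r by simp
      ultimately show ?thesis
        using bound[of w] by simp
    qed
  qed
  also have "\<dots> \<le> B * pi / r"
  proof -
    have "r / (1 + r\<^sup>2) \<le> 1 / r"
      using r by (simp add: divide_simps power2_eq_square add_pos_nonneg)
    from mult_left_mono[OF this, of "B * pi"] B show ?thesis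
      by (simp add: mult_ac)
  qed
  finally show ?thesis
    by simp
qed

lemma tendsto_integral_symmetric_interval:
  fixes f :: "real \<Rightarrow> 'a::euclidean_space"
  assumes "integrable lborel f"
  shows "((\<lambda>R. integral {-R..R} f) \<longlongrightarrow> (\<integral>x. f x \<partial>lborel)) at_top"
proof -
  have "((\<lambda>R. \<integral>x. indicator {-R..R} x *\<^sub>R f x \<partial>lborel) \<longlongrightarrow> (\<integral>x. f x \<partial>lborel)) at_top"
  proof (rule integral_dominated_convergence_at_top[where w = "\<lambda>x. norm (f x)"])
    show "AE x in lborel. ((\<lambda>R. indicator {-R..R} x *\<^sub>R f x) \<longlongrightarrow> f x) at_top" for x
    proof (rule always_eventually, intro allI tendsto_eventually)
      fix x :: real
      show "\<forall>\<^sub>F R in at_top. indicator {-R..R} x *\<^sub>R f x = f x"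
        using eventually_ge_at_top[of "\<bar>x\<bar>"] by eventually_elim (auto simp: indicator_def)
    qed
  qed (use assms in \<open>auto simp: indicator_def\<close>)
  moreover have "(\<integral>x. indicator {-R..R} x *\<^sub>R f x \<partial>lborel) = integral {-R..R} f" for R
    using set_borel_integral_eq_integral(2)[of "{-R..R}" f] assms
    unfolding set_lebesgue_integral_def set_integrable_def
    by (simp add: integrable_mult_indicator)
  ultimately show ?thesis
    by simp
qed

lemma continuous_on_real_line_if_holomorphic_upper_halfplane:
  fixes f :: "complex \<Rightarrow> complex"
  assumes "\<And>w. Im w \<ge> 0 \<Longrightarrow> f field_differentiable at w"
  shows "continuous_on UNIV (\<lambda>x::real. f (of_real x))"
proof -
  have "continuous_on {w. Im w \<ge> 0} f"
    by (intro continuous_at_imp_continuous_on ballI field_differentiable_imp_continuous_at assms) simp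
  then show ?thesis
    by (rule continuous_on_compose2) (auto intro: continuous_intros)
qed

lemma integral_eq_0_if_holomorphic_decaying_upper_halfplane:
  fixes f :: "complex \<Rightarrow> complex" and B :: real
  assumes holo: "\<And>w. Im w \<ge> 0 \<Longrightarrow> f field_differentiable at w"
    and bound: "\<And>w. Im w \<ge> 0 \<Longrightarrow> cmod (f w) \<le> B / (1 + (cmod w)\<^sup>2)"
  shows "integrable lborel (\<lambda>x. f (of_real x))" and "(\<integral>x. f (of_real x) \<partial>lborel) = 0"
proof -
  have meas: "(\<lambda>x::real. f (of_real x)) \<in> borel_measurable lborel"
    using borel_measurable_continuous_onI[OF continuous_on_real_line_if_holomorphic_upper_halfplane]
      holo by simp
  have "cmod (f 0) \<le> B"
    using bound[of 0] by simp
  then have B: "B \<ge> 0"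
    using norm_ge_zero order_trans by blast
  show int: "integrable lborel (\<lambda>x. f (of_real x))"
  proof (rule Bochner_Integration.integrable_bound[OF _ meas])
    show "integrable lborel (\<lambda>x::real. B * inverse (1 + x\<^sup>2))"
      using integrable_inverse_1_plus_square by (simp add: set_integrable_def)
    show "AE x in lborel. cmod (f (of_real x)) \<le> norm (B * inverse (1 + x\<^sup>2))"
    proof (intro always_eventually allI)
      fix x :: real
      show "cmod (f (of_real x)) \<le> norm (B * inverse (1 + x\<^sup>2))"
        using bound[of "of_real x"] B by (simp add: divide_inverse abs_mult)
    qed
  qed
  have "((\<lambda>R. integral {-R..R} (\<lambda>x. f (of_real x))) \<longlongrightarrow> 0) at_top"
  proof (rule Lim_null_comparison)
    show "\<forall>\<^sub>F R in at_top. cmod (integral {-R..R} (\<lambda>x. f (of_real x))) \<le> B * pi * inverse R"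
      using eventually_gt_at_top[of 0]
      by eventually_elim (use norm_integral_symmetric_interval_le[OF holo bound] in
          \<open>simp add: divide_inverse\<close>)
    show "((\<lambda>R. B * pi * inverse R) \<longlongrightarrow> 0) at_top"
      by (intro tendsto_mult_right_zero tendsto_inverse_0_at_top filterlim_ident)
  qed
  with tendsto_integral_symmetric_interval[OF int]
  show "(\<integral>x. f (of_real x) \<partial>lborel) = 0"
    by (rule tendsto_unique[OF trivial_limit_at_top_linorder])
qed

lemma field_differentiable_exp_compose:
  fixes f :: "complex \<Rightarrow> complex"
  assumes "f field_differentiable at z"
  shows "(\<lambda>w. exp (f w)) field_differentiable at z"
  using field_differentiable_compose[OF assms field_differentiable_within_exp[of _ UNIV]]
  by (simp add: o_def)

lemma integral_bounded_holomorphic_fourier_eq_0: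
  fixes g :: "complex \<Rightarrow> complex" and B t :: real
  assumes holo: "\<And>w. Im w \<ge> 0 \<Longrightarrow> g field_differentiable at w"
    and bound: "\<And>w. Im w \<ge> 0 \<Longrightarrow> cmod (g w) \<le> B"
    and t: "t \<le> 0"
  shows "integrable lborel
           (\<lambda>\<omega>. g (of_real \<omega>) * exp (- \<i> * of_real (\<omega> * t)) / (1 - \<i> * of_real \<omega>)\<^sup>2)"
    and "(\<integral>\<omega>. g (of_real \<omega>) * exp (- \<i> * of_real (\<omega> * t)) / (1 - \<i> * of_real \<omega>)\<^sup>2 \<partial>lborel) = 0"
proof -
  define f where "f w = g w * exp (- \<i> * w * of_real t) / (1 - \<i> * w)\<^sup>2" for w
  have denom: "Im w \<ge> 0 \<Longrightarrow> 1 - \<i> * w \<noteq> 0" for w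
    using one_minus_ii_mult_upper_halfplane(2)[of w 1] by simp
  have "f field_differentiable at w" if "Im w \<ge> 0" for w
    unfolding f_def using that denom
    by (intro derivative_intros holo field_differentiable_exp_compose) auto
  moreover have "cmod (f w) \<le> B / (1 + (cmod w)\<^sup>2)" if w: "Im w \<ge> 0" for w
  proof -
    \<comment> \<open>\<open>|e^{-iwt}| = e^{t Im w} \<le> 1\<close> because \<open>t \<le> 0\<close>: this is where causality enters.\<close>
    have "cmod (exp (- \<i> * w * of_real t)) \<le> 1"
      using w t by (simp add: mult_nonneg_nonpos)
    then have "cmod (g w * exp (- \<i> * w * of_real t)) \<le> B"
      using bound[OF w] by (metis mult_left_le norm_ge_zero norm_mult order_trans)
    moreover have "0 < 1 + (cmod w)\<^sup>2"
      by (simp add: add_pos_nonneg)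
    ultimately show ?thesis
      unfolding f_def norm_divide
      using one_plus_norm_square_le[OF w]
      by (meson frac_le norm_ge_zero order_trans)
  qed
  ultimately have "integrable lborel (\<lambda>x. f (of_real x))" "(\<integral>x. f (of_real x) \<partial>lborel) = 0"
    using integral_eq_0_if_holomorphic_decaying_upper_halfplane[of f B] by auto
  moreover have "f (of_real \<omega>) =
      g (of_real \<omega>) * exp (- \<i> * of_real (\<omega> * t)) / (1 - \<i> * of_real \<omega>)\<^sup>2" for \<omega>
    by (simp add: f_def mult.assoc)
  ultimately show
    "integrable lborel
       (\<lambda>\<omega>. g (of_real \<omega>) * exp (- \<i> * of_real (\<omega> * t)) / (1 - \<i> * of_real \<omega>)\<^sup>2)"
    "(\<integral>\<omega>. g (of_real \<omega>) * exp (- \<i> * of_real (\<omega> * t)) / (1 - \<i> * of_real \<omega>)\<^sup>2 \<partial>lborel) = 0"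
    by simp_all
qed

lemma lborel_integral_continuous_vanishing_outside:
  fixes f :: "real \<Rightarrow> complex"
  assumes cont: "continuous_on UNIV f" and vanish: "\<And>t. t \<notin> {a..b} \<Longrightarrow> f t = 0"
  shows "integrable lborel f" and "(\<integral>t. f t \<partial>lborel) = integral {a..b} f"
proof -
  have f_eq: "f = (\<lambda>x. indicator {a..b} x *\<^sub>R f x)"
    using vanish by (auto simp: indicator_def fun_eq_iff)
  have int: "set_integrable lborel {a..b} f"
    unfolding set_integrable_def
    by (rule borel_integrable_compact[OF compact_Icc continuous_on_subset[OF cont]]) auto
  then show "integrable lborel f"
    unfolding set_integrable_def by (subst f_eq)
  show "(\<integral>t. f t \<partial>lborel) = integral {a..b} f"
    using set_borel_integral_eq_integral(2)[OF int] unfolding set_lebesgue_integral_def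
    by (subst f_eq) simp
qed

lemma inv_fourier_derivative:
  fixes u u' :: "real \<Rightarrow> complex"
  assumes der: "\<And>t. (u has_vector_derivative u' t) (at t)"
    and cont': "continuous_on UNIV u'"
    and vanish: "\<And>t. t \<notin> {a..b} \<Longrightarrow> u t = 0" and vanish': "\<And>t. t \<notin> {a..b} \<Longrightarrow> u' t = 0"
    and "a \<le> b"
  shows "inv_fourier u' \<omega> = \<i> * of_real \<omega> * inv_fourier u \<omega>"
proof -
  define e where "e t = exp (- \<i> * complex_of_real (t * \<omega>))" for t
  define I where "I = {a - 1..b + 1}"
  have cont: "continuous_on UNIV u"
    using der by (intro continuous_at_imp_continuous_on ballI has_vector_derivative_continuous) auto
  have cont_e: "continuous_on UNIV e"
    unfolding e_def by (intro continuous_intros)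
  have lborel_I: "(\<integral>t. e t * v t \<partial>lborel) = integral I (\<lambda>t. e t * v t)"
    if "continuous_on UNIV v" "\<And>t. t \<notin> {a..b} \<Longrightarrow> v t = 0" for v
    unfolding I_def
    by (rule lborel_integral_continuous_vanishing_outside(2))
      (use that cont_e in \<open>auto intro: continuous_intros\<close>)
  have int: "(\<lambda>t. e t * v t) integrable_on I" if "continuous_on UNIV v" for v
    unfolding I_def
    by (rule integrable_continuous_interval) (use that cont_e in \<open>auto intro: continuous_intros
        continuous_on_subset\<close>)
  have "((\<lambda>t. e t * u' t + (- \<i> * of_real \<omega>) * (e t * u t)) has_integral
        (e (b + 1) * u (b + 1) - e (a - 1) * u (a - 1))) I"
    unfolding I_def
  proof (rule fundamental_theorem_of_calculus)
    show "a - 1 \<le> b + 1"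
      using \<open>a \<le> b\<close> by simp
    fix x
    have "((\<lambda>t. exp (- \<i> * of_real \<omega> * t)) has_field_derivative
        exp (- \<i> * of_real \<omega> * of_real x) * (- \<i> * of_real \<omega>)) (at (of_real x))"
      by (auto intro!: derivative_eq_intros)
    from has_vector_derivative_real_field[OF this]
    have "(e has_vector_derivative (- \<i> * of_real \<omega>) * e x) (at x within {a - 1..b + 1})"
      unfolding e_def by (auto simp: mult_ac intro: has_vector_derivative_at_within)
    from has_vector_derivative_mult[OF this has_vector_derivative_at_within[OF der]]
    show "((\<lambda>t. e t * u t) has_vector_derivative
        (e x * u' x + (- \<i> * of_real \<omega>) * (e x * u x))) (at x within {a - 1..b + 1})"
      by (simp add: mult_ac)
  qed
  moreover have "u (b + 1) = 0" "u (a - 1) = 0"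
    using vanish by auto
  ultimately have "integral I (\<lambda>t. e t * u' t + (- \<i> * of_real \<omega>) * (e t * u t)) = 0"
    using integral_unique by force
  then have "integral I (\<lambda>t. e t * u' t) = \<i> * of_real \<omega> * integral I (\<lambda>t. e t * u t)"
    unfolding integral_add[OF int[OF cont'] integrable_on_mult_right[OF int[OF cont]]]
      integral_mult_right
    by (simp add: eq_neg_iff_add_eq_0)
  then show ?thesis
    using lborel_I[OF cont' vanish'] lborel_I[OF cont vanish]
    unfolding inv_fourier_def e_def[symmetric] by simp
qed

lemma test_fun_onE:
  assumes "test_fun_on U \<phi>"
  obtains D :: "nat \<Rightarrow> real \<Rightarrow> complex" and M :: real
  where "D 0 = \<phi>" "\<And>k t. (D k has_vector_derivative D (Suc k) t) (at t)"
    "\<And>k. continuous_on UNIV (D k)" "M \<ge> 0"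
    "\<And>k t. t \<notin> {-M..M} \<Longrightarrow> D k t = 0" "\<And>k t. D k t \<noteq> 0 \<Longrightarrow> t \<in> U"
proof -
  define S where "S = closure {t. \<phi> t \<noteq> 0}"
  from assms obtain D :: "nat \<Rightarrow> real \<Rightarrow> complex" where D0: "D 0 = \<phi>"
    and der: "\<And>k t. (D k has_vector_derivative D (Suc k) t) (at t)"
    and compact_S: "compact S" and S_U: "S \<subseteq> U"
    unfolding test_fun_on_def smooth_fun_def S_def by blast
  have vanish: "t \<notin> S \<Longrightarrow> D k t = 0" for k t
  proof (induction k arbitrary: t)
    case 0
    then show ?case
      using closure_subset[of "{t. \<phi> t \<noteq> 0}"] by (auto simp: D0 S_def)
  next
    case (Suc k)
    have "(D k has_vector_derivative 0) (at t)"
      by (rule has_vector_derivative_transform_within_open[OF has_vector_derivative_const, of "- S"])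
        (use Suc in \<open>auto simp: S_def\<close>)
    then show ?case
      using vector_derivative_unique_at[OF der[of k t]] by simp
  qed
  obtain M where M: "M \<ge> 0" "\<And>t. t \<in> S \<Longrightarrow> \<bar>t\<bar> \<le> M"
    using compact_imp_bounded[OF compact_S] unfolding bounded_iff
    by (metis abs_ge_zero order_trans real_norm_def)
  show ?thesis
  proof (rule that[OF D0 der _ M(1)])
    show "continuous_on UNIV (D k)" for k
      using der by (intro continuous_at_imp_continuous_on ballI has_vector_derivative_continuous) auto
    show "D k t = 0" if "t \<notin> {-M..M}" for k t
      using that M(2)[of t] vanish by force
    show "t \<in> U" if "D k t \<noteq> 0" for k t
      using that vanish S_U by blast
  qed
qed

lemma test_fun_on_inv_fourier_multiplier:
  assumes "test_fun_on U \<phi>"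
  obtains \<psi> M
  where "continuous_on UNIV \<psi>" "\<And>t. t \<notin> {-M..M} \<Longrightarrow> \<psi> t = 0" "\<And>t. \<psi> t \<noteq> 0 \<Longrightarrow> t \<in> U"
    "\<And>\<omega>. inv_fourier \<psi> \<omega> = (1 - \<i> * of_real \<omega>)\<^sup>2 * inv_fourier \<phi> \<omega>"
proof -
  obtain D M where D0: "D 0 = \<phi>"
    and der: "\<And>k t. (D k has_vector_derivative D (Suc k) t) (at t)"
    and cont: "\<And>k. continuous_on UNIV (D k)" and M: "M \<ge> 0"
    and vanish: "\<And>k t. t \<notin> {-M..M} \<Longrightarrow> D k t = 0" and supp: "\<And>k t. D k t \<noteq> 0 \<Longrightarrow> t \<in> U"
    using test_fun_onE[OF assms] by metis
  define \<psi> where "\<psi> t = D 0 t - 2 * D 1 t + D 2 t" for t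
  have int: "integrable lborel (\<lambda>t. exp (- \<i> * of_real (t * \<omega>)) * D k t)" for k \<omega>
    by (rule lborel_integral_continuous_vanishing_outside(1)[of _ "-M" M])
      (use vanish in \<open>auto intro!: continuous_intros cont\<close>)
  have deriv: "inv_fourier (D (Suc k)) \<omega> = \<i> * of_real \<omega> * inv_fourier (D k) \<omega>" for k \<omega>
    using M vanish by (intro inv_fourier_derivative[OF der cont, where a = "-M" and b = M]) auto
  have "inv_fourier \<psi> \<omega> = inv_fourier (D 0) \<omega> - 2 * inv_fourier (D 1) \<omega> + inv_fourier (D 2) \<omega>"
    for \<omega>
  proof -
    define e where "e t = exp (- \<i> * of_real (t * \<omega>))" for t
    have "(\<integral>t. e t * \<psi> t \<partial>lborel) = (\<integral>t. e t * D 0 t - 2 * (e t * D 1 t) + e t * D 2 t \<partial>lborel)"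
      unfolding \<psi>_def by (simp add: distrib_left right_diff_distrib mult.left_commute)
    also have "\<dots> = (\<integral>t. e t * D 0 t \<partial>lborel) - 2 * (\<integral>t. e t * D 1 t \<partial>lborel)
        + (\<integral>t. e t * D 2 t \<partial>lborel)"
      using int[of \<omega>] unfolding e_def by simp
    finally show ?thesis
      unfolding inv_fourier_def e_def by (simp add: distrib_left right_diff_distrib)
  qed
  also have "\<dots> \<omega> = (1 - \<i> * of_real \<omega>)\<^sup>2 * inv_fourier \<phi> \<omega>" for \<omega>
    using deriv[of 0 \<omega>] deriv[of 1 \<omega>]
    by (simp add: D0 numeral_2_eq_2 power2_eq_square algebra_simps)
  finally have multiplier: "inv_fourier \<psi> \<omega> = (1 - \<i> * of_real \<omega>)\<^sup>2 * inv_fourier \<phi> \<omega>" for \<omega> .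
  show ?thesis
  proof (rule that[OF _ _ _ multiplier])
    show "continuous_on UNIV \<psi>"
      unfolding \<psi>_def by (intro continuous_intros cont)
    show "\<psi> t = 0" if "t \<notin> {-M..M}" for t
      using vanish[OF that] by (simp add: \<psi>_def)
    show "t \<in> U" if "\<psi> t \<noteq> 0" for t
      using that supp unfolding \<psi>_def by (metis add_0 diff_zero mult_zero_right)
  qed
qed

lemma lborel_Fubini_integral_of_norm_eq_mult:
  fixes F :: "real \<Rightarrow> real \<Rightarrow> 'c::{banach, second_countable_topology}" and a b :: "real \<Rightarrow> real"
  assumes cont: "continuous_on UNIV (\<lambda>p. F (fst p) (snd p))"
    and a: "integrable lborel a" and b: "integrable lborel b"
    and norm_F: "\<And>x y. norm (F x y) = \<bar>a x\<bar> * \<bar>b y\<bar>"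
  shows "(\<integral>x. (\<integral>y. F x y \<partial>lborel) \<partial>lborel) = (\<integral>y. (\<integral>x. F x y \<partial>lborel) \<partial>lborel)"
proof -
  have meas: "(\<lambda>(x, y). F x y) \<in> borel_measurable (lborel \<Otimes>\<^sub>M lborel)"
    using cont unfolding lborel_prod measurable_lborel2 case_prod_beta'
    by (rule borel_measurable_continuous_onI)
  have "integrable (lborel \<Otimes>\<^sub>M lborel) (\<lambda>(x, y). F x y)"
  proof (rule lborel_pair.Fubini_integrable[OF meas])
    show "integrable lborel (\<lambda>x. \<integral>y. norm (case (x, y) of (x, y) \<Rightarrow> F x y) \<partial>lborel)"
      unfolding prod.case norm_F integral_mult_right_zero
      by (intro integrable_mult_left integrable_abs a)
    show "AE x in lborel. integrable lborel (\<lambda>y. case (x, y) of (x, y) \<Rightarrow> F x y)"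
    proof (intro always_eventually allI)
      fix x :: real
      have "(\<lambda>y. F x y) \<in> borel_measurable lborel"
        using meas by measurable
      then show "integrable lborel (\<lambda>y. case (x, y) of (x, y) \<Rightarrow> F x y)"
        unfolding prod.case
        by (rule Bochner_Integration.integrable_bound[OF integrable_mult_right[OF b, of "\<bar>a x\<bar>"]])
          (simp add: norm_F abs_mult)
    qed
  qed
  then show ?thesis
    by (intro lborel_pair.Fubini_integral[symmetric]) (simp add: case_prod_beta')
qed

lemma integral_bounded_holomorphic_inv_fourier_eq_0:
  fixes g :: "complex \<Rightarrow> complex" and \<psi> :: "real \<Rightarrow> complex" and B a b :: real
  assumes holo: "\<And>w. Im w \<ge> 0 \<Longrightarrow> g field_differentiable at w"
    and bound: "\<And>w. Im w \<ge> 0 \<Longrightarrow> cmod (g w) \<le> B"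
    and cont: "continuous_on UNIV \<psi>" and vanish: "\<And>t. t \<notin> {a..b} \<Longrightarrow> \<psi> t = 0"
    and supp: "\<And>t. \<psi> t \<noteq> 0 \<Longrightarrow> t \<le> 0"
  shows "(\<integral>\<omega>. g (of_real \<omega>) * inv_fourier \<psi> \<omega> / (1 - \<i> * of_real \<omega>)\<^sup>2 \<partial>lborel) = 0"
proof -
  define G where "G \<omega> t = g (of_real \<omega>) * exp (- \<i> * of_real (\<omega> * t)) / (1 - \<i> * of_real \<omega>)\<^sup>2"
    for \<omega> t :: real
  define \<Phi> where "\<Phi> \<omega> t = G \<omega> t * \<psi> t" for \<omega> t
  define c where "c = 1 / complex_of_real (sqrt (2 * pi))"
  have denom: "1 - \<i> * complex_of_real \<omega> \<noteq> 0" for \<omega>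
    using one_minus_ii_mult_upper_halfplane(2)[of "of_real \<omega>" 1] by simp
  have integrand: "g (of_real \<omega>) * inv_fourier \<psi> \<omega> / (1 - \<i> * of_real \<omega>)\<^sup>2 = c * (\<integral>t. \<Phi> \<omega> t \<partial>lborel)"
    for \<omega>
  proof -
    have "\<Phi> \<omega> t = g (of_real \<omega>) / (1 - \<i> * of_real \<omega>)\<^sup>2 * (exp (- \<i> * of_real (t * \<omega>)) * \<psi> t)"
      for t
      by (simp add: \<Phi>_def G_def mult.commute)
    then show ?thesis
      unfolding inv_fourier_def c_def by simp
  qed
  have cont_\<Phi>: "continuous_on UNIV (\<lambda>p. \<Phi> (fst p) (snd p))"
    using continuous_on_real_line_if_holomorphic_upper_halfplane[OF holo] cont denom
    unfolding \<Phi>_def G_def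
    by (intro continuous_intros continuous_on_compose2[of UNIV _ UNIV fst]
        continuous_on_compose2[of UNIV _ UNIV snd]) auto
  have int_G0: "integrable lborel (\<lambda>\<omega>. G \<omega> 0)"
    using integral_bounded_holomorphic_fourier_eq_0(1)[OF holo bound, of 0] by (simp add: G_def)
  have int_\<psi>: "integrable lborel \<psi>"
    by (rule lborel_integral_continuous_vanishing_outside(1)[OF cont vanish])
  have "cmod (\<Phi> \<omega> t) = \<bar>cmod (G \<omega> 0)\<bar> * \<bar>cmod (\<psi> t)\<bar>" for \<omega> t
    by (simp add: \<Phi>_def G_def norm_mult norm_divide norm_exp_eq_Re)
  then have "(\<integral>\<omega>. (\<integral>t. \<Phi> \<omega> t \<partial>lborel) \<partial>lborel) = (\<integral>t. (\<integral>\<omega>. \<Phi> \<omega> t \<partial>lborel) \<partial>lborel)"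
    by (rule lborel_Fubini_integral_of_norm_eq_mult[OF cont_\<Phi> integrable_norm[OF int_G0]
          integrable_norm[OF int_\<psi>]])
  also have "\<dots> = 0"
  proof -
    have "(\<integral>\<omega>. \<Phi> \<omega> t \<partial>lborel) = 0" for t
    proof (cases "\<psi> t = 0")
      case False
      then have "(\<integral>\<omega>. G \<omega> t \<partial>lborel) = 0"
        using integral_bounded_holomorphic_fourier_eq_0(2)[OF holo bound supp] by (simp add: G_def)
      then show ?thesis
        by (simp add: \<Phi>_def)
    qed (simp add: \<Phi>_def)
    then show ?thesis
      by simp
  qed
  finally show ?thesis
    unfolding integrand by simp
qed

lemma kernel_pairing_eq_0_if_bounded_holomorphic_upper_halfplane:
  fixes g :: "complex \<Rightarrow> complex" and B :: real
  assumes holo: "\<And>w. Im w \<ge> 0 \<Longrightarrow> g field_differentiable at w"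
    and bound: "\<And>w. Im w \<ge> 0 \<Longrightarrow> cmod (g w) \<le> B"
    and "test_fun_on {..<0} \<phi>"
  shows "kernel_pairing (\<lambda>\<omega>. g (of_real \<omega>)) \<phi> = 0"
proof -
  obtain \<psi> M where cont: "continuous_on UNIV \<psi>" and vanish: "\<And>t. t \<notin> {-M..M} \<Longrightarrow> \<psi> t = 0"
    and supp: "\<And>t. \<psi> t \<noteq> 0 \<Longrightarrow> t \<in> {..<0}"
    and multiplier: "\<And>\<omega>. inv_fourier \<psi> \<omega> = (1 - \<i> * of_real \<omega>)\<^sup>2 * inv_fourier \<phi> \<omega>"
    using test_fun_on_inv_fourier_multiplier[OF assms(3)] by metis
  have "g (of_real \<omega>) * inv_fourier \<phi> \<omega> = g (of_real \<omega>) * inv_fourier \<psi> \<omega> / (1 - \<i> * of_real \<omega>)\<^sup>2"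
    for \<omega>
    using one_minus_ii_mult_upper_halfplane(2)[of "of_real \<omega>" 1] by (simp add: multiplier)
  moreover have "(\<integral>\<omega>. g (of_real \<omega>) * inv_fourier \<psi> \<omega> / (1 - \<i> * of_real \<omega>)\<^sup>2 \<partial>lborel) = 0"
  proof (rule integral_bounded_holomorphic_inv_fourier_eq_0[OF holo bound cont vanish])
    show "t \<le> 0" if "\<psi> t \<noteq> 0" for t
      using supp[OF that] by simp
  qed
  ultimately show ?thesis
    unfolding kernel_pairing_def by simp
qed

locale nsw_parameters =
  fixes N :: nat and c0 rho0 :: real and kappa tau :: "nat \<Rightarrow> real"
  assumes N: "N \<ge> 1" and c0: "c0 > 0" and rho0: "rho0 > 0"
    and kappa: "\<And>m. m \<in> {1..N} \<Longrightarrow> kappa m > 0"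
    and tau: "\<And>m. m \<in> {1..N} \<Longrightarrow> tau m > 0"
    and tau_tilde_less: "\<And>m. m \<in> {1..N} \<Longrightarrow> tau_tilde c0 rho0 kappa tau N m < tau m"
begin

abbreviation "tt \<equiv> tau_tilde c0 rho0 kappa tau N"

definition "S = (\<Sum>m=1..N. c0\<^sup>2 * rho0 * kappa m)"

definition "A = c0 / c0_tilde c0 rho0 kappa N"

definition "beta m = 1 - tt m / tau m"

definition radicand :: "complex \<Rightarrow> complex" where
  "radicand w = (1 / of_nat N) *
     (\<Sum>m=1..N. (1 - \<i> * (of_real (tt m) * w)) / (1 - \<i> * (of_real (tau m) * w)))"

definition relaxation :: "complex \<Rightarrow> complex" where
  "relaxation w = (\<Sum>m=1..N. of_real (beta m) / (1 - \<i> * of_real (tau m) * w))"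

definition alpha :: "complex \<Rightarrow> complex" where
  "alpha w = (- \<i> * w / of_real c0) * (of_real A * csqrt (radicand w) - 1)"

lemma alpha_nsw_eq: "alpha_nsw c0 rho0 kappa tau N \<omega> = alpha (of_real \<omega>)"
  unfolding alpha_nsw_def alpha_def radicand_def A_def by simp

lemma S_nonneg: "S \<ge> 0"
  unfolding S_def using kappa rho0 by (intro sum_nonneg) (simp add: less_imp_le)

lemma A_eq: "A = sqrt (1 + S)"
proof -
  have "c0_tilde c0 rho0 kappa N = c0 / sqrt (1 + S)"
    unfolding c0_tilde_def S_def ..
  then show ?thesis
    unfolding A_def using c0 S_nonneg by simp
qed

lemma A_pos: "A > 0"
  using S_nonneg by (simp add: A_eq)

lemma beta_pos: "m \<in> {1..N} \<Longrightarrow> beta m > 0"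
  unfolding beta_def using tau_tilde_less[of m] tau[of m] by simp

lemma mean_tau_ratio: "(1 / real N) * (\<Sum>m=1..N. tt m / tau m) = 1 / (1 + S)"
proof -
  have c0_tilde_sq: "(c0_tilde c0 rho0 kappa N)\<^sup>2 = c0\<^sup>2 / (1 + S)"
    unfolding c0_tilde_def S_def[symmetric] using S_nonneg by (simp add: power_divide)
  have "tt m / tau m = 1 - real N * (c0\<^sup>2 / (1 + S)) * rho0 * kappa m" if "m \<in> {1..N}" for m
    using tau[OF that] unfolding tau_tilde_def c0_tilde_sq by simp
  then have "(\<Sum>m=1..N. tt m / tau m) = (\<Sum>m=1..N. 1 - real N * (c0\<^sup>2 / (1 + S)) * rho0 * kappa m)"
    by (rule sum.cong[OF refl])
  also have "\<dots> = real N - real N / (1 + S) * (\<Sum>m=1..N. c0\<^sup>2 * rho0 * kappa m)"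
    by (simp add: sum_subtractf sum_distrib_left mult_ac)
  also have "\<dots> = real N - real N / (1 + S) * S"
    unfolding S_def ..
  finally show ?thesis
    using N S_nonneg by (simp add: field_simps)
qed

lemma radicand_eq:
  assumes "Im w \<ge> 0"
  shows "radicand w = of_real (1 / (1 + S)) + relaxation w / of_nat N"
proof -
  have "(1 - \<i> * (of_real (tt m) * w)) / (1 - \<i> * (of_real (tau m) * w))
      = of_real (tt m / tau m) + of_real (beta m) / (1 - \<i> * of_real (tau m) * w)"
    if m: "m \<in> {1..N}" for m
  proof -
    have "1 - \<i> * of_real (tau m) * w \<noteq> 0"
      using one_minus_ii_mult_upper_halfplane(2)[OF assms] tau[OF m] by simp
    then show ?thesis
      using tau[OF m] unfolding beta_def by (simp add: field_simps)
  qed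
  then have "radicand w = (1 / of_nat N) * (\<Sum>m=1..N. of_real (tt m / tau m)) + relaxation w / of_nat N"
    unfolding radicand_def relaxation_def by (simp add: sum.distrib distrib_left sum_divide_distrib)
  also have "(1 / of_nat N) * (\<Sum>m=1..N. of_real (tt m / tau m)) = (of_real (1 / (1 + S)) :: complex)"
    unfolding mean_tau_ratio[symmetric] by simp
  finally show ?thesis .
qed

lemma Re_relaxation_nonneg:
  assumes "Im w \<ge> 0"
  shows "Re (relaxation w) \<ge> 0"
  unfolding relaxation_def Re_sum
proof (intro sum_nonneg)
  fix m assume m: "m \<in> {1..N}"
  have "Re (1 - \<i> * of_real (tau m) * w) \<ge> 1"
    using one_minus_ii_mult_upper_halfplane(1)[OF assms] tau[OF m] by simp
  then show "Re (of_real (beta m) / (1 - \<i> * of_real (tau m) * w)) \<ge> 0"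
    using beta_pos[OF m] by (simp add: Re_divide)
qed

lemma norm_mult_relaxation_le:
  assumes "Im w \<ge> 0"
  shows "cmod (w * relaxation w) \<le> (\<Sum>m=1..N. beta m / tau m)"
  unfolding relaxation_def sum_distrib_left
proof (rule order_trans[OF norm_sum sum_mono])
  fix m assume m: "m \<in> {1..N}"
  define d where "d = 1 - \<i> * of_real (tau m) * w"
  have d: "tau m * cmod w \<le> cmod d" "d \<noteq> 0"
    using one_minus_ii_mult_upper_halfplane(2,3)[OF assms] tau[OF m] by (simp_all add: d_def)
  then have "cmod w / cmod d \<le> 1 / tau m"
    using tau[OF m] by (simp add: divide_simps mult.commute)
  from mult_left_mono[OF this, of "beta m"]
  show "cmod (w * (of_real (beta m) / d)) \<le> beta m / tau m"
    using beta_pos[OF m] by (simp add: norm_mult norm_divide mult_ac)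
qed

lemma radicand_field_differentiable:
  assumes "Im w \<ge> 0"
  shows "radicand field_differentiable at w"
proof -
  have "1 - \<i> * (of_real (tau m) * w) \<noteq> 0" if "m \<in> {1..N}" for m
    using one_minus_ii_mult_upper_halfplane(2)[OF assms] tau[OF that] by (simp add: mult.assoc)
  then have "(\<lambda>w. (1 / of_nat N) * (\<Sum>m=1..N.
      (1 - \<i> * (of_real (tt m) * w)) / (1 - \<i> * (of_real (tau m) * w)))) field_differentiable at w"
    by (intro derivative_intros) auto
  then show ?thesis
    unfolding radicand_def[abs_def] .
qed

lemma alpha_field_differentiable:
  assumes "Im w \<ge> 0"
  shows "alpha field_differentiable at w"
proof -
  have "Re (radicand w) > 0"
    using radicand_eq[OF assms] Re_relaxation_nonneg[OF assms] N S_nonneg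
    by (simp add: add_pos_nonneg)
  then have "radicand w \<notin> \<real>\<^sub>\<le>\<^sub>0"
    by (auto simp: complex_nonpos_Reals_iff)
  then have "(\<lambda>w. csqrt (radicand w)) field_differentiable at w"
    using field_differentiable_compose[OF radicand_field_differentiable[OF assms]
        field_differentiable_at_csqrt] by (simp add: o_def)
  then show ?thesis
    unfolding alpha_def[abs_def] using c0 by (intro derivative_intros) auto
qed

lemma conjugate_product_radicand:
  assumes "Im w \<ge> 0"
  shows "(of_real A * csqrt (radicand w) - 1) * (of_real A * csqrt (radicand w) + 1)
    = of_real (1 + S) * relaxation w / of_nat N"
proof -
  have "csqrt (radicand w) * csqrt (radicand w) = radicand w"
    using power2_csqrt[of "radicand w"] by (simp add: power2_eq_square)
  then have "(of_real A * csqrt (radicand w) - 1) * (of_real A * csqrt (radicand w) + 1)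
      = of_real (A\<^sup>2) * radicand w - 1"
    by (simp add: algebra_simps power2_eq_square)
  also have "of_real (A\<^sup>2) * of_real (1 / (1 + S)) = (1 :: complex)"
    using S_nonneg unfolding of_real_mult[symmetric] A_eq by simp
  then have "of_real (A\<^sup>2) * radicand w - 1 = of_real (1 + S) * relaxation w / of_nat N"
    using S_nonneg unfolding radicand_eq[OF assms] distrib_left by (simp add: A_eq)
  finally show ?thesis .
qed

text \<open>The factor \<open>A \<surd>radicand(w) + 1\<close> has real part at least 1, so dividing by it does not
  increase the modulus.\<close>

lemma norm_alpha_le:
  assumes "Im w \<ge> 0"
  shows "cmod (alpha w) \<le> (1 + S) / real N * (\<Sum>m=1..N. beta m / tau m) / c0"
proof -
  define s where "s = csqrt (radicand w)"
  have "Re (of_real A * s + 1) \<ge> 1"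
    using A_pos Re_csqrt[of "radicand w"] unfolding s_def by simp
  then have "cmod (of_real A * s + 1) \<ge> 1"
    using complex_Re_le_cmod order_trans by blast
  from mult_left_mono[OF this, of "cmod (w * (of_real A * s - 1))"]
  have "cmod (w * (of_real A * s - 1)) \<le> cmod (w * (of_real A * s - 1)) * cmod (of_real A * s + 1)"
    by simp
  also have "\<dots> = cmod (w * ((of_real A * s - 1) * (of_real A * s + 1)))"
    by (simp add: norm_mult)
  also have "\<dots> = (1 + S) / real N * cmod (w * relaxation w)"
    unfolding s_def conjugate_product_radicand[OF assms] norm_mult norm_divide norm_of_real norm_of_nat
    using S_nonneg by simp
  also have "\<dots> \<le> (1 + S) / real N * (\<Sum>m=1..N. beta m / tau m)"
    using norm_mult_relaxation_le[OF assms] S_nonneg by (intro mult_left_mono) auto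
  finally have "cmod (w * (of_real A * s - 1)) \<le> (1 + S) / real N * (\<Sum>m=1..N. beta m / tau m)" .
  moreover have "cmod (alpha w) = cmod (w * (of_real A * s - 1)) / c0"
    unfolding alpha_def s_def using c0 by (simp add: norm_mult norm_divide)
  ultimately show ?thesis
    using c0 by (metis divide_right_mono less_imp_le)
qed

end

theorem theorem6:
  fixes N :: nat and c0 rho0 :: real and kappa tau :: "nat \<Rightarrow> real"
  assumes "N \<ge> 1"
    and "c0 > 0" and "rho0 > 0"
    and "\<And>m. m \<in> {1..N} \<Longrightarrow> kappa m > 0"
    and "\<And>m. m \<in> {1..N} \<Longrightarrow> tau m > 0"
    and "\<And>m. m \<in> {1..N} \<Longrightarrow> tau_tilde c0 rho0 kappa tau N m < tau m"
  shows "causal_kernel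
           (\<lambda>(x::real^3) \<omega>. exp (- alpha_nsw c0 rho0 kappa tau N \<omega> * complex_of_real (norm x)))"
proof -
  interpret nsw_parameters N c0 rho0 kappa tau
    using assms by unfold_locales
  define C where "C = (1 + S) / real N * (\<Sum>m=1..N. beta m / tau m) / c0"
  have "kernel_pairing (\<lambda>\<omega>. exp (- alpha (of_real \<omega>) * of_real r)) \<phi> = 0"
    if r: "r \<ge> 0" and \<phi>: "test_fun_on {..<0} \<phi>" for r \<phi>
  proof (rule kernel_pairing_eq_0_if_bounded_holomorphic_upper_halfplane[OF _ _ \<phi>])
    show "(\<lambda>w. exp (- alpha w * of_real r)) field_differentiable at w" if "Im w \<ge> 0" for w
      by (intro field_differentiable_exp_compose derivative_intros alpha_field_differentiable that)
    show "cmod (exp (- alpha w * of_real r)) \<le> exp (r * C)" if "Im w \<ge> 0" for w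
    proof -
      have "- Re (alpha w) \<le> C"
        using norm_alpha_le[OF that] abs_Re_le_cmod[of "alpha w"] unfolding C_def by linarith
      from mult_left_mono[OF this r] show ?thesis
        by (simp add: mult.commute)
    qed
  qed
  then show ?thesis
    unfolding causal_kernel_def alpha_nsw_eq by simp
qed

end
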